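(* Let $n,m\ge 1$ be integers and let $\pi$ be a probability distribution on a parameter space of vectors $\theta$. For each $i=1,\ldots,n$ and each $\theta$, let $A_i(\theta)$ be a well-defined $m\times m$ nonnegative definite matrix. For $w=(w_1,\ldots,w_n)$ put $M(w,\theta)=\sum_{i=1}^n w_i A_i(\theta)$, and define $$\phi(w)=\int \log\det M(w,\theta)\,\mathrm{d}\pi(\theta),\qquad d_i(w)=\int \operatorname{tr}\big(M^{-1}(w,\theta)A_i(\theta)\big)\,\mathrm{d}\pi(\theta),\quad i=1,\ldots,n.$$ Let $\Omega=\{w\in\mathbb{R}^n:\ \sum_{i=1}^n w_i=1,\ w_i>0 \text{ for all } i\}$. Assume $\phi(w)$ is finite for at least one $w\in\Omega$. Let $w^{(t)},w^{(t+1)}\in\Omega$ and a real number $\alpha^{(t)}$ satisfy $$w_i^{(t+1)}=w_i^{(t)}\,\frac{d_i\big(w^{(t)}\big)-\alpha^{(t)}}{m-\alpha^{(t)}},\quad i=1,\ldots,n,\qquad\text{where}\qquad \alpha^{(t)}\le \frac12\min_{1\le i\le n} d_i\big(w^{(t)}\big).$$ Then $\phi\big(w^{(t+1)}\big)\ge\phi\big(w^{(t)}\big)$, with equality only if $w^{(t+1)}=w^{(t)}$.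
   Context: $\phi$ is the Bayesian D-optimality criterion for an approximate design with weights $w_i$ on a finite design space $\{x_1,\ldots,x_n\}$, where $A_i(\theta)$ is the Fisher information matrix for the $m$-dimensional parameter $\theta$ from one unit at design point $x_i$. $M^{-1}$ denotes the matrix inverse. *)

theory Defs
  imports "HOL-Analysis.Analysis" "HOL-Probability.Probability"
begin

definition nonneg_def_mat :: "real^'m^'m \<Rightarrow> bool" where
  "nonneg_def_mat B \<longleftrightarrow> transpose B = B \<and> (\<forall>x. 0 \<le> x \<bullet> (B *v x))"

definition Mmat :: "('n::finite \<Rightarrow> 'p \<Rightarrow> real^'m^'m) \<Rightarrow> real^'n \<Rightarrow> 'p \<Rightarrow> real^'m^'m" where
  "Mmat A w \<theta> = (\<Sum>i\<in>UNIV. (w $ i) *\<^sub>R A i \<theta>)"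

definition phi :: "'p measure \<Rightarrow> ('n::finite \<Rightarrow> 'p \<Rightarrow> real^'m^'m) \<Rightarrow> real^'n \<Rightarrow> real" where
  "phi \<pi> A w = (\<integral>\<theta>. ln (det (Mmat A w \<theta>)) \<partial>\<pi>)"

definition dfun :: "'p measure \<Rightarrow> ('n::finite \<Rightarrow> 'p \<Rightarrow> real^'m^'m) \<Rightarrow> real^'n \<Rightarrow> 'n \<Rightarrow> real" where
  "dfun \<pi> A w i = (\<integral>\<theta>. trace (matrix_inv (Mmat A w \<theta>) ** A i \<theta>) \<partial>\<pi>)"

definition Omega :: "(real^'n::finite) set" where
  "Omega = {w. (\<Sum>i\<in>UNIV. w $ i) = 1 \<and> (\<forall>i. 0 < w $ i)}"

text \<open>phi(w) finite: log det M(w,.) is a.s. well defined (det > 0) and integrable.\<close>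
definition phi_finite :: "'p measure \<Rightarrow> ('n::finite \<Rightarrow> 'p \<Rightarrow> real^'m^'m) \<Rightarrow> real^'n \<Rightarrow> bool" where
  "phi_finite \<pi> A w \<longleftrightarrow> (AE \<theta> in \<pi>. 0 < det (Mmat A w \<theta>)) \<and>
      integrable \<pi> (\<lambda>\<theta>. ln (det (Mmat A w \<theta>)))"

end

theory Submission
  imports Defs
begin

text \<open>For fixed \<open>\<theta>\<close> put \<open>B\<^sub>i = w\<^sub>i A\<^sub>i(\<theta>)\<close> and \<open>r\<^sub>i = w'\<^sub>i / w\<^sub>i\<close>, so that \<open>M(w) = \<Sum>\<^sub>i B\<^sub>i\<close> and
  \<open>M(w') = \<Sum>\<^sub>i r\<^sub>i B\<^sub>i\<close>. Diagonalising both matrices simultaneously and using concavity of \<open>ln\<close> on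
  each diagonal entry gives \<open>ln det M(w') \<ge> ln det M(w) + \<Sum>\<^sub>i w\<^sub>i tr(M(w)\<^sup>-\<^sup>1 A\<^sub>i(\<theta>)) ln r\<^sub>i\<close>.
  Integrating against \<open>\<pi>\<close> yields \<open>\<phi>(w') \<ge> \<phi>(w) + \<Sum>\<^sub>i w\<^sub>i d\<^sub>i(w) ln r\<^sub>i\<close>, and for the update
  \<open>r\<^sub>i = (d\<^sub>i - \<alpha>) / (m - \<alpha>)\<close> with \<open>\<alpha> \<le> min\<^sub>i d\<^sub>i / 2\<close> this sum is a nonnegative combination
  of values of a function of \<open>r\<^sub>i\<close> that vanishes only at \<open>r\<^sub>i = 1\<close>. The same pointwise inequality,
  applied in both directions, bounds \<open>ln det M(w')\<close> by \<open>ln det M(w)\<close> up to a constant, which is why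
  finiteness of \<open>\<phi>\<close> at one point of \<open>Omega\<close> gives finiteness everywhere on \<open>Omega\<close>.\<close>

lemma matrix_vector_mult_sum_left:
  fixes B :: "'a \<Rightarrow> real^'m^'n"
  shows "sum B I *v x = (\<Sum>i\<in>I. B i *v x)"
  by (induction I rule: infinite_finite_induct) (auto simp: matrix_vector_mult_add_rdistrib)

lemma transpose_sum:
  fixes B :: "'a \<Rightarrow> real^'m^'n"
  shows "transpose (sum B I) = (\<Sum>i\<in>I. transpose (B i))"
  by (induction I rule: infinite_finite_induct) (auto simp: transpose_def vec_eq_iff)

lemma trace_mult_sum_right:
  fixes P :: "real^'m^'m" and B :: "'a \<Rightarrow> real^'m^'m"
  shows "trace (P ** sum B I) = (\<Sum>i\<in>I. trace (P ** B i))"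
  by (induction I rule: infinite_finite_induct) 
     (simp_all add: matrix_add_ldistrib trace_add trace_def[of 0])

lemma trace_mult_scaleR_right:
  fixes P B :: "real^'m^'m"
  shows "trace (P ** (c *\<^sub>R B)) = c * trace (P ** B)"
  by (simp add: trace_def matrix_matrix_mult_def sum_distrib_left mult.left_commute)

lemma nonneg_def_mat_scaleR:
  "nonneg_def_mat B \<Longrightarrow> 0 \<le> c \<Longrightarrow> nonneg_def_mat (c *\<^sub>R B)"
  by (auto simp: nonneg_def_mat_def transpose_scalar scaleR_matrix_vector_assoc[symmetric])

lemma nonneg_def_mat_sum:
  "(\<And>i. i \<in> I \<Longrightarrow> nonneg_def_mat (B i)) \<Longrightarrow> nonneg_def_mat (\<Sum>i\<in>I. B i)"
  by (auto simp: nonneg_def_mat_def transpose_sum matrix_vector_mult_sum_left inner_sum_right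
      intro: sum_nonneg)

lemma symmetric_matrix_inner_commute:
  fixes S :: "real^'m^'m"
  assumes "transpose S = S"
  shows "x \<bullet> (S *v y) = (S *v x) \<bullet> y"
  by (metis assms dot_lmul_matrix vector_transpose_matrix)

lemma inner_matrix_vector_mult_transpose:
  fixes V :: "real^'j^'i"
  shows "(V *v a) \<bullet> w = a \<bullet> (transpose V *v w)"
  by (metis dot_lmul_matrix transpose_transpose vector_transpose_matrix)

definition column_matrix :: "('j::finite \<Rightarrow> real^'i) \<Rightarrow> real^'j^'i" where
  "column_matrix u = (\<chi> i j. u j $ i)"

lemma column_matrix_congruence_entry:
  "(transpose (column_matrix u) ** B ** column_matrix v) $ i $ j = u i \<bullet> (B *v v j)"
proof -
  have "(transpose (column_matrix u) ** B ** column_matrix v) $ i $ j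
      = (\<Sum>k\<in>UNIV. \<Sum>l\<in>UNIV. u i $ l * (B $ l $ k * v j $ k))"
    by (simp add: column_matrix_def matrix_matrix_mult_def transpose_def
        sum_distrib_right mult.assoc)
  also have "\<dots> = u i \<bullet> (B *v v j)"
    by (subst sum.swap) (simp add: inner_vec_def matrix_vector_mult_def sum_distrib_left)
  finally show ?thesis .
qed

lemma matrix_inv_eq_left_inverse:
  fixes X P :: "real^'m^'m"
  assumes "P ** X = mat 1"
  shows "matrix_inv X = P"
proof -
  have XP: "X ** P = mat 1" using assms matrix_left_right_inverse by blast
  have "X ** matrix_inv X = mat 1 \<and> matrix_inv X ** X = mat 1"
    unfolding matrix_inv_def by (rule someI[of _ P]) (use XP assms in blast)
  hence "matrix_inv X = (matrix_inv X ** X) ** P"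
    by (metis XP matrix_mul_assoc matrix_mul_rid)
  also have "\<dots> = P" using \<open>_ \<and> matrix_inv X ** X = mat 1\<close> by simp
  finally show ?thesis .
qed

section \<open>Spectral theorem for real symmetric matrices\<close>

lemma quadratic_nonpos_linear_coeff_zero:
  fixes c a :: real
  assumes "\<And>t. 2 * t * c + t\<^sup>2 * a \<le> 0"
  shows "c = 0"
proof -
  define b where "b = \<bar>a\<bar> + 1"
  have b: "b > 0" "2 * b + a > 0" unfolding b_def by (auto simp: abs_if)
  have "2 * (c / b) * c + (c / b)\<^sup>2 * a = c\<^sup>2 * (2 * b + a) / b\<^sup>2"
    using b by (simp add: field_simps power2_eq_square)
  with assms[of "c / b"] have "c\<^sup>2 * (2 * b + a) \<le> 0"
    using b by (simp add: divide_le_0_iff)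
  with b show ?thesis by (simp add: mult_le_0_iff)
qed

text \<open>A maximiser of the Rayleigh quotient on an invariant subspace is an eigenvector: perturbing
  it in an orthogonal direction within the subspace must not increase the quotient to first order.\<close>
lemma symmetric_matrix_rayleigh_max_eigenvector:
  fixes S :: "real^'m^'m"
  assumes sym: "transpose S = S" and W: "subspace W" and inv: "\<And>x. x \<in> W \<Longrightarrow> S *v x \<in> W"
    and vW: "v \<in> W" and vn: "v \<bullet> v = 1"
    and vmax: "\<And>y. y \<in> W \<Longrightarrow> y \<bullet> (S *v y) \<le> (v \<bullet> (S *v v)) * (y \<bullet> y)"
  shows "S *v v = (v \<bullet> (S *v v)) *\<^sub>R v"
proof -
  let ?f = "\<lambda>x. x \<bullet> (S *v x)"
  have perp: "y \<bullet> (S *v v) = 0" if yW: "y \<in> W" and yv: "y \<bullet> v = 0" for y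
  proof (rule quadratic_nonpos_linear_coeff_zero)
    fix t :: real
    have "v + t *\<^sub>R y \<in> W" using vW yW W by (simp add: subspace_add subspace_scale)
    from vmax[OF this]
    have "?f v + 2 * t * (y \<bullet> (S *v v)) + t\<^sup>2 * ?f y \<le> ?f v * (1 + t\<^sup>2 * (y \<bullet> y))"
      using symmetric_matrix_inner_commute[OF sym, of v y] vn yv
      by (simp add: matrix_vector_right_distrib matrix_vector_mult_scaleR inner_add_left
          inner_add_right power2_eq_square algebra_simps inner_commute)
    thus "2 * t * (y \<bullet> (S *v v)) + t\<^sup>2 * (?f y - ?f v * (y \<bullet> y)) \<le> 0"
      by (simp add: algebra_simps)
  qed
  define z where "z = S *v v - ?f v *\<^sub>R v"
  have "z \<in> W" unfolding z_def using W vW inv by (simp add: subspace_diff subspace_scale)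
  moreover have zv: "z \<bullet> v = 0"
    unfolding z_def using vn by (simp add: inner_diff_left inner_commute[of "S *v v" v])
  ultimately have "z \<bullet> (S *v v) = 0" by (rule perp)
  hence "z \<bullet> z = 0" using zv by (simp add: z_def inner_diff_right)
  thus ?thesis by (simp add: z_def)
qed

lemma symmetric_matrix_eigenvector_in_invariant_subspace:
  fixes S :: "real^'m^'m"
  assumes sym: "transpose S = S" and W: "subspace W" and inv: "\<And>x. x \<in> W \<Longrightarrow> S *v x \<in> W"
    and nontriv: "x0 \<in> W" "x0 \<noteq> 0"
  obtains v where "v \<in> W" "v \<bullet> v = 1" "S *v v = (v \<bullet> (S *v v)) *\<^sub>R v"
proof -
  define f where "f x = x \<bullet> (S *v x)" for x :: "real^'m"
  define K where "K = W \<inter> sphere 0 1"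
  have unit: "(1 / norm x) *\<^sub>R x \<in> K" if "x \<in> W" "x \<noteq> 0" for x
    using that W by (simp add: K_def subspace_scale)
  have "compact K" unfolding K_def using W by (simp add: closed_subspace closed_Int_compact)
  moreover have "K \<noteq> {}" using unit[OF nontriv] by blast
  moreover have "continuous_on K f" unfolding f_def by (intro continuous_intros)
  ultimately obtain v where vK: "v \<in> K" and vmax: "\<And>y. y \<in> K \<Longrightarrow> f y \<le> f v"
    by (metis continuous_attains_sup)
  have "f y \<le> f v * (y \<bullet> y)" if "y \<in> W" for y
  proof (cases "y = 0")
    case False
    have "f ((1 / norm y) *\<^sub>R y) = f y / (norm y)\<^sup>2"
      by (simp add: f_def matrix_vector_mult_scaleR power2_eq_square)
    with vmax[OF unit[OF that False]] False show ?thesis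
      by (simp add: divide_le_eq mult.commute dot_square_norm)
  qed (simp add: f_def)
  moreover have "v \<in> W" "v \<bullet> v = 1" using vK by (auto simp: K_def dot_square_norm)
  ultimately show ?thesis
    using that symmetric_matrix_rayleigh_max_eigenvector[OF sym W inv] unfolding f_def by blast
qed

lemma symmetric_matrix_eigenvector_orthogonal_to:
  fixes S :: "real^'m^'m" and E :: "(real^'m) set"
  assumes sym: "transpose S = S" and fin: "finite E" and card: "card E < CARD('m)"
    and eig: "\<And>e. e \<in> E \<Longrightarrow> \<exists>l. S *v e = l *\<^sub>R e"
  obtains v where "v \<bullet> v = 1" "\<forall>e\<in>E. v \<bullet> e = 0" "\<exists>l. S *v v = l *\<^sub>R v"
proof -
  define W where "W = {x::real^'m. \<forall>e\<in>E. x \<bullet> e = 0}"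
  have W: "subspace W" by (auto simp: subspace_def W_def inner_add_left)
  have inv: "S *v x \<in> W" if "x \<in> W" for x
  proof -
    have "(S *v x) \<bullet> e = 0" if "e \<in> E" for e
      using eig[OF that] \<open>x \<in> W\<close> that symmetric_matrix_inner_commute[OF sym, of x e]
      by (auto simp: W_def inner_commute)
    thus ?thesis by (simp add: W_def)
  qed
  have "dim E < DIM(real^'m)" using dim_le_card[OF order_refl fin] card by simp
  then obtain x0 :: "real^'m" where "x0 \<noteq> 0" "\<And>y. y \<in> span E \<Longrightarrow> orthogonal x0 y"
    using orthogonal_to_subspace_exists by blast
  moreover from this have "x0 \<in> W" by (auto simp: W_def orthogonal_def span_base)
  ultimately obtain v where "v \<in> W" "v \<bullet> v = 1" "S *v v = (v \<bullet> (S *v v)) *\<^sub>R v"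
    using symmetric_matrix_eigenvector_in_invariant_subspace[OF sym W inv] by blast
  thus ?thesis using that by (auto simp: W_def)
qed

lemma symmetric_matrix_orthonormal_eigenvectors:
  fixes S :: "real^'m^'m"
  assumes sym: "transpose S = S" and "k \<le> CARD('m)"
  shows "\<exists>E. finite E \<and> card E = k \<and> pairwise orthogonal E
           \<and> (\<forall>e\<in>E. e \<bullet> e = 1 \<and> (\<exists>l. S *v e = l *\<^sub>R e))"
  using assms(2)
proof (induction k)
  case 0
  show ?case by (intro exI[of _ "{}"]) auto
next
  case (Suc k)
  then obtain E where E: "finite E" "card E = k" "pairwise orthogonal E"
    "\<forall>e\<in>E. e \<bullet> e = 1 \<and> (\<exists>l. S *v e = l *\<^sub>R e)" by auto
  obtain v where v: "v \<bullet> v = 1" "\<forall>e\<in>E. v \<bullet> e = 0" "\<exists>l. S *v v = l *\<^sub>R v"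
    using symmetric_matrix_eigenvector_orthogonal_to[OF sym E(1)] E Suc.prems by auto
  have "pairwise orthogonal (insert v E)"
    using E(3) v(2) by (auto simp: pairwise_insert orthogonal_def inner_commute)
  moreover have "v \<notin> E" using v by auto
  ultimately show ?case using E v by (intro exI[of _ "insert v E"]) auto
qed

lemma symmetric_matrix_orthonormal_eigenbasis:
  fixes S :: "real^'m^'m"
  assumes sym: "transpose S = S"
  obtains u :: "'m \<Rightarrow> real^'m" and l :: "'m \<Rightarrow> real"
  where "\<And>i j. u i \<bullet> u j = (if i = j then 1 else 0)" "\<And>i. S *v u i = l i *\<^sub>R u i"
proof -
  obtain E where E: "finite E" "card E = CARD('m)" "pairwise orthogonal E"
    "\<forall>e\<in>E. e \<bullet> e = 1 \<and> (\<exists>l. S *v e = l *\<^sub>R e)"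
    using symmetric_matrix_orthonormal_eigenvectors[OF sym order_refl] by blast
  then obtain u :: "'m \<Rightarrow> real^'m" where u: "bij_betw u UNIV E"
    using finite_same_card_bij[of "UNIV :: 'm set" E] by auto
  hence uE: "u i \<in> E" and uinj: "i \<noteq> j \<Longrightarrow> u i \<noteq> u j" for i j
    by (auto simp: bij_betw_def inj_on_def)
  have "\<forall>i. \<exists>l. S *v u i = l *\<^sub>R u i" using E(4) uE by blast
  then obtain l where "\<And>i. S *v u i = l i *\<^sub>R u i" by metis
  moreover have "u i \<bullet> u j = (if i = j then 1 else 0)" for i j
    using E(3,4) uE uinj by (auto simp: pairwise_def orthogonal_def)
  ultimately show ?thesis using that by blast
qed

section \<open>Simultaneous diagonalisation and the log-determinant\<close>

lemma pos_def_matrix_orthonormal_basis: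
  fixes X :: "real^'m^'m"
  assumes X: "nonneg_def_mat X" and det: "det X \<noteq> 0"
  obtains v :: "'m \<Rightarrow> real^'m" where "\<And>i j. v i \<bullet> (X *v v j) = (if i = j then 1 else 0)"
proof -
  obtain q :: "'m \<Rightarrow> real^'m" and l :: "'m \<Rightarrow> real"
    where q: "\<And>i j. q i \<bullet> q j = (if i = j then 1 else 0)" and ql: "\<And>i. X *v q i = l i *\<^sub>R q i"
    using symmetric_matrix_orthonormal_eigenbasis X unfolding nonneg_def_mat_def by blast
  have inj: "inj ((*v) X)" using det by (simp add: inj_matrix_vector_mult invertible_det_nz)
  have lpos: "l i > 0" for i
  proof -
    have "l i = q i \<bullet> (X *v q i)" using q[of i i] by (simp add: ql)
    moreover have "X *v q i \<noteq> 0"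
      using q[of i i] injD[OF inj, of "q i" 0] by auto
    ultimately show ?thesis using X ql[of i] unfolding nonneg_def_mat_def
      by (metis less_eq_real_def scale_eq_0_iff)
  qed
  define v where "v i = (1 / sqrt (l i)) *\<^sub>R q i" for i
  have "v i \<bullet> (X *v v j) = (if i = j then 1 else 0)" for i j
  proof (cases "i = j")
    case True
    have "sqrt (l j) * sqrt (l j) = l j" using lpos[of j] by simp
    thus ?thesis using True q[of j j] lpos[of j]
      by (simp add: v_def matrix_vector_mult_scaleR ql field_simps)
  qed (simp add: v_def matrix_vector_mult_scaleR ql q)
  thus ?thesis by (rule that)
qed

text \<open>Take an \<open>X\<close>-orthonormal basis \<open>v\<close> and diagonalise \<open>Y\<close> in it: the congruent matrix
  \<open>V\<^sup>T Y V\<close> is symmetric, so its orthonormal eigenbasis, mapped back by \<open>V\<close>, does both jobs.\<close>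
lemma simultaneous_diagonalization:
  fixes X Y :: "real^'m^'m"
  assumes X: "nonneg_def_mat X" and detX: "det X \<noteq> 0" and symY: "transpose Y = Y"
  obtains u :: "'m \<Rightarrow> real^'m" where "\<And>i j. u i \<bullet> (X *v u j) = (if i = j then 1 else 0)"
    "\<And>i j. i \<noteq> j \<Longrightarrow> u i \<bullet> (Y *v u j) = 0"
proof -
  obtain v :: "'m \<Rightarrow> real^'m" where vX: "\<And>i j. v i \<bullet> (X *v v j) = (if i = j then 1 else 0)"
    using pos_def_matrix_orthonormal_basis[OF X detX] by blast
  define V where "V = column_matrix v"
  have congr: "(V *v a) \<bullet> (Z *v (V *v b)) = a \<bullet> ((transpose V ** Z ** V) *v b)" for Z a b
    unfolding inner_matrix_vector_mult_transpose
    by (simp only: matrix_vector_mul_assoc matrix_mul_assoc)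
  have VXV: "transpose V ** X ** V = mat 1"
    by (simp add: vec_eq_iff V_def column_matrix_congruence_entry vX mat_def)
  have "transpose (transpose V ** Y ** V) = transpose V ** Y ** V"
    by (simp add: matrix_transpose_mul symY matrix_mul_assoc)
  then obtain r :: "'m \<Rightarrow> real^'m" and \<mu> :: "'m \<Rightarrow> real"
    where r: "\<And>i j. r i \<bullet> r j = (if i = j then 1 else 0)"
      and r\<mu>: "\<And>i. (transpose V ** Y ** V) *v r i = \<mu> i *\<^sub>R r i"
    using symmetric_matrix_orthonormal_eigenbasis by blast
  show ?thesis
  proof (rule that[of "\<lambda>i. V *v r i"])
    show "(V *v r i) \<bullet> (X *v (V *v r j)) = (if i = j then 1 else 0)" for i j
      by (simp add: congr VXV r)
    show "(V *v r i) \<bullet> (Y *v (V *v r j)) = 0" if "i \<noteq> j" for i j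
      using that by (simp add: congr r\<mu> r)
  qed
qed

lemma det_eq_prod_diagonal_congruence:
  fixes X Y :: "real^'m^'m" and u :: "'m \<Rightarrow> real^'m"
  assumes uX: "\<And>i j. u i \<bullet> (X *v u j) = (if i = j then 1 else 0)"
    and uY: "\<And>i j. i \<noteq> j \<Longrightarrow> u i \<bullet> (Y *v u j) = 0"
  shows "det Y = (\<Prod>k\<in>UNIV. u k \<bullet> (Y *v u k)) * det X"
proof -
  define U where "U = column_matrix u"
  have "transpose U ** X ** U = mat 1"
    by (simp add: vec_eq_iff U_def column_matrix_congruence_entry uX mat_def)
  hence "det (transpose U ** X ** U) = 1" by simp
  hence dX: "det U * det U * det X = 1" by (simp add: det_mul mult_ac)
  have "det (transpose U ** Y ** U) = (\<Prod>k\<in>UNIV. (transpose U ** Y ** U) $ k $ k)"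
    by (rule det_diagonal) (simp add: U_def column_matrix_congruence_entry uY)
  hence "det U * det U * det Y = (\<Prod>k\<in>UNIV. u k \<bullet> (Y *v u k))"
    by (simp add: det_mul U_def column_matrix_congruence_entry mult_ac)
  with dX show ?thesis by (metis mult.commute mult.left_commute mult_1)
qed

lemma trace_matrix_inv_mult_eq_sum:
  fixes X B :: "real^'m^'m" and u :: "'m \<Rightarrow> real^'m"
  assumes uX: "\<And>i j. u i \<bullet> (X *v u j) = (if i = j then 1 else 0)"
  shows "trace (matrix_inv X ** B) = (\<Sum>k\<in>UNIV. u k \<bullet> (B *v u k))"
proof -
  define U where "U = column_matrix u"
  have "transpose U ** X ** U = mat 1"
    by (simp add: vec_eq_iff U_def column_matrix_congruence_entry uX mat_def)
  hence "(U ** transpose U) ** X = mat 1"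
    using matrix_left_right_inverse by (metis matrix_mul_assoc)
  hence "trace (matrix_inv X ** B) = trace (U ** (transpose U ** B))"
    by (simp add: matrix_inv_eq_left_inverse matrix_mul_assoc)
  also have "\<dots> = trace ((transpose U ** B) ** U)" by (rule trace_mul_sym)
  also have "\<dots> = (\<Sum>k\<in>UNIV. u k \<bullet> (B *v u k))"
    by (simp add: trace_def U_def column_matrix_congruence_entry)
  finally show ?thesis .
qed

lemma trace_matrix_inv_mult_nonneg_def:
  fixes X B :: "real^'m^'m"
  assumes X: "nonneg_def_mat X" and det: "det X \<noteq> 0"
  shows "nonneg_def_mat B \<Longrightarrow> 0 \<le> trace (matrix_inv X ** B)"
    and "trace (matrix_inv X ** X) = real CARD('m)"
proof -
  obtain u :: "'m \<Rightarrow> real^'m" where uX: "\<And>i j. u i \<bullet> (X *v u j) = (if i = j then 1 else 0)"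
    using pos_def_matrix_orthonormal_basis[OF X det] by blast
  show "0 \<le> trace (matrix_inv X ** B)" if "nonneg_def_mat B"
    using that by (simp add: trace_matrix_inv_mult_eq_sum[OF uX] nonneg_def_mat_def sum_nonneg)
  show "trace (matrix_inv X ** X) = real CARD('m)"
    by (simp add: trace_matrix_inv_mult_eq_sum[OF uX] uX)
qed

lemma ln_weighted_sum_ge:
  fixes a y :: "'a \<Rightarrow> real"
  assumes "finite S" "S \<noteq> {}" "(\<Sum>i\<in>S. a i) = 1" "\<And>i. i \<in> S \<Longrightarrow> a i \<ge> 0"
    and "\<And>i. i \<in> S \<Longrightarrow> y i > 0"
  shows "(\<Sum>i\<in>S. a i * ln (y i)) \<le> ln (\<Sum>i\<in>S. a i * y i)"
proof -
  have "convex_on {0<..} (\<lambda>x. - ln x)" using ln_concave by (simp add: concave_on_def)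
  from convex_on_sum[OF assms(1,2) this assms(3,4), of y] assms(5)
  have "- ln (\<Sum>i\<in>S. a i * y i) \<le> (\<Sum>i\<in>S. a i * - ln (y i))" by auto
  thus ?thesis by (simp add: sum_negf)
qed

text \<open>In a basis \<open>u\<close> that is orthonormal for \<open>X = \<Sum>i. B i\<close> and diagonalises
  \<open>Y = \<Sum>i. r i *\<^sub>R B i\<close>, the \<open>k\<close>-th diagonal entry of \<open>Y\<close> is a convex combination of the \<open>r i\<close>
  with weights \<open>u k \<bullet> (B i *v u k)\<close>, whose sum over \<open>k\<close> is \<open>trace (matrix_inv X ** B i)\<close>;
  apply Jensen's inequality for \<open>ln\<close> to each diagonal entry.\<close>
lemma ln_det_sum_scaleR_ge:
  fixes B :: "'n::finite \<Rightarrow> real^'m^'m" and r :: "'n \<Rightarrow> real"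
  assumes nnd: "\<And>i. nonneg_def_mat (B i)" and r: "\<And>i. r i > 0"
    and det: "det (\<Sum>i\<in>UNIV. B i) > 0"
  shows "det (\<Sum>i\<in>UNIV. r i *\<^sub>R B i) > 0"
    and "ln (det (\<Sum>i\<in>UNIV. B i)) + (\<Sum>i\<in>UNIV. trace (matrix_inv (\<Sum>i\<in>UNIV. B i) ** B i) * ln (r i))
          \<le> ln (det (\<Sum>i\<in>UNIV. r i *\<^sub>R B i))"
proof -
  define X where "X = (\<Sum>i\<in>UNIV. B i)"
  define Y where "Y = (\<Sum>i\<in>UNIV. r i *\<^sub>R B i)"
  have "nonneg_def_mat X" "nonneg_def_mat Y"
    using nnd r
    by (auto simp: X_def Y_def intro!: nonneg_def_mat_sum nonneg_def_mat_scaleR less_imp_le)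
  then obtain u :: "'m \<Rightarrow> real^'m" where uX: "\<And>i j. u i \<bullet> (X *v u j) = (if i = j then 1 else 0)"
    and uY: "\<And>i j. i \<noteq> j \<Longrightarrow> u i \<bullet> (Y *v u j) = 0"
    using simultaneous_diagonalization det unfolding nonneg_def_mat_def X_def
    by (metis less_irrefl)
  define c where "c i k = u k \<bullet> (B i *v u k)" for i k
  have c0: "c i k \<ge> 0" for i k using nnd by (simp add: c_def nonneg_def_mat_def)
  have c1: "(\<Sum>i\<in>UNIV. c i k) = 1" for k
    using uX[of k k] by (simp add: c_def X_def matrix_vector_mult_sum_left inner_sum_right)
  have diagY: "u k \<bullet> (Y *v u k) = (\<Sum>i\<in>UNIV. c i k * r i)" for k
    by (simp add: c_def Y_def matrix_vector_mult_sum_left inner_sum_right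
        scaleR_matrix_vector_assoc[symmetric] mult.commute)
  have diagY_pos: "(\<Sum>i\<in>UNIV. c i k * r i) > 0" for k
  proof -
    obtain i where "c i k \<noteq> 0" using c1[of k] by (metis sum.neutral zero_neq_one)
    hence "c i k * r i > 0" using c0[of i k] r[of i] by simp
    thus ?thesis by (intro sum_pos2[of UNIV i]) (auto intro: mult_nonneg_nonneg c0 less_imp_le r)
  qed
  have detY: "det Y = (\<Prod>k\<in>UNIV. \<Sum>i\<in>UNIV. c i k * r i) * det X"
    using det_eq_prod_diagonal_congruence[OF uX uY] by (simp add: diagY)
  thus "det (\<Sum>i\<in>UNIV. r i *\<^sub>R B i) > 0"
    using det diagY_pos by (simp add: X_def Y_def prod_pos)
  have "(\<Sum>i\<in>UNIV. trace (matrix_inv X ** B i) * ln (r i))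
      = (\<Sum>k\<in>UNIV. \<Sum>i\<in>UNIV. c i k * ln (r i))"
    unfolding trace_matrix_inv_mult_eq_sum[OF uX] c_def sum_distrib_right by (rule sum.swap)
  also have "\<dots> \<le> (\<Sum>k\<in>UNIV. ln (\<Sum>i\<in>UNIV. c i k * r i))"
    by (intro sum_mono ln_weighted_sum_ge) (auto simp: c1 c0 r)
  also have "\<dots> = ln (det Y) - ln (det X)"
    unfolding detY using det diagY_pos
    by (simp add: X_def ln_mult prod_pos ln_prod less_imp_neq[symmetric])
  finally show "ln (det (\<Sum>i\<in>UNIV. B i)) + (\<Sum>i\<in>UNIV. trace (matrix_inv (\<Sum>i\<in>UNIV. B i) ** B i) * ln (r i))
          \<le> ln (det (\<Sum>i\<in>UNIV. r i *\<^sub>R B i))"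
    by (simp add: X_def Y_def)
qed

section \<open>Measurability of the matrix inverse\<close>

definition replace_column :: "'n \<Rightarrow> real^'m \<Rightarrow> real^'n^'m \<Rightarrow> real^'n^'m" where
  "replace_column k b X = (\<chi> i j. if j = k then b $ i else X $ i $ j)"

text \<open>For singular \<open>X\<close> the defining predicate of \<open>matrix_inv\<close> is unsatisfiable, so all
  singular matrices share the same (unspecified) junk inverse.\<close>
lemma matrix_inv_singular:
  fixes X :: "real^'m^'m"
  assumes "det X = 0"
  shows "matrix_inv X = matrix_inv (0::real^'m^'m)"
proof -
  have no_inverse: "X ** P \<noteq> mat 1" if "det X = 0" for X P :: "real^'m^'m"
  proof
    assume "X ** P = mat 1"
    hence "det X * det P = 1" by (metis det_I det_mul)
    with that show False by simp
  qed
  have "det (0::real^'m^'m) = 0"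
    by (rule det_zero_row(1)[of undefined]) (simp add: row_def vec_eq_iff)
  thus ?thesis unfolding matrix_inv_def using no_inverse assms by metis
qed

lemma matrix_inv_entry_cramer:
  fixes X :: "real^'m^'m"
  assumes "det X \<noteq> 0"
  shows "matrix_inv X $ k $ j = det (replace_column k (axis j 1) X) / det X"
proof -
  obtain P where P: "X ** P = mat 1" "P ** X = mat 1"
    using assms invertible_det_nz[of X] unfolding invertible_def by blast
  hence "matrix_inv X = P" by (simp add: matrix_inv_eq_left_inverse)
  have "X *v (P *v axis j 1) = axis j 1" by (simp add: matrix_vector_mul_assoc P)
  hence "(P *v axis j 1) $ k = det (replace_column k (axis j 1) X) / det X"
    using cramer[OF assms] by (simp add: replace_column_def)
  moreover have "(P *v axis j 1) $ k = P $ k $ j"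
    by (simp add: matrix_vector_mult_def axis_def if_distrib cong: if_cong)
  ultimately show ?thesis using \<open>matrix_inv X = P\<close> by simp
qed

lemma borel_measurable_matrix_entry:
  fixes F :: "'a \<Rightarrow> real^'n^'m"
  assumes "F \<in> borel_measurable M"
  shows "(\<lambda>x. F x $ i $ j) \<in> borel_measurable M"
proof -
  have "continuous_on UNIV (\<lambda>X::real^'n^'m. X $ i $ j)" by (intro continuous_intros)
  thus ?thesis using measurable_compose[OF assms borel_measurable_continuous_onI] by blast
qed

lemma borel_measurable_det:
  fixes F :: "'a \<Rightarrow> real^'m^'m"
  assumes "\<And>i j. (\<lambda>x. F x $ i $ j) \<in> borel_measurable M"
  shows "(\<lambda>x. det (F x)) \<in> borel_measurable M"
  unfolding det_def using assms by measurable

lemma borel_measurable_trace_matrix_inv_mult: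
  fixes F G :: "'a \<Rightarrow> real^'m^'m"
  assumes F: "F \<in> borel_measurable M" and G: "G \<in> borel_measurable M"
  shows "(\<lambda>x. trace (matrix_inv (F x) ** G x)) \<in> borel_measurable M"
proof -
  have "matrix_inv (F x) $ k $ j = (if det (F x) = 0 then matrix_inv (0::real^'m^'m) $ k $ j
      else det (replace_column k (axis j 1) (F x)) / det (F x))" for x k j
    by (simp add: matrix_inv_singular matrix_inv_entry_cramer)
  moreover have "(\<lambda>x. det (F x)) \<in> borel_measurable M"
    "(\<lambda>x. det (replace_column k b (F x))) \<in> borel_measurable M" for k b
    using borel_measurable_matrix_entry[OF F]
    by (auto simp: replace_column_def intro!: borel_measurable_det)
  ultimately show ?thesis
    using borel_measurable_matrix_entry[OF G]
    by (simp add: trace_def matrix_matrix_mult_def) measurable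
qed

section \<open>The scalar inequality behind the update\<close>

lemma ln_less_minus_one:
  fixes x :: real
  assumes "0 < x" "x \<noteq> 1"
  shows "ln x < x - 1"
  using ln_le_minus_one[of x] ln_eq_minus_one[of x] assms by linarith

text \<open>The difference of the two sides vanishes at \<open>r = 1\<close> and its derivative \<open>ln t + b (1 - t) / t\<close>
  has the sign of \<open>t - 1\<close> between \<open>1\<close> and \<open>r\<close>: use \<open>b \<le> 1\<close> for \<open>t > 1\<close> and \<open>b \<le> t\<close> for \<open>t < 1\<close>.\<close>
lemma shifted_ln_gt_linear:
  fixes r b :: real
  assumes b1: "b \<le> 1" and r0: "0 < r" and br: "b \<le> r" and r1: "r \<noteq> 1"
  shows "(1 + b) * (r - 1) < (r + b) * ln r"
proof -
  define h where "h t = (t + b) * ln t - (1 + b) * (t - 1)" for t :: real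
  have deriv: "DERIV h t :> ln t + b * (1 - t) / t" if "t > 0" for t
    unfolding h_def using that by (auto intro!: derivative_eq_intros simp: field_simps)
  have cont: "continuous_on {a..c} h" if "a > 0" for a c
    unfolding h_def using that by (intro continuous_intros) auto
  have "h 1 < h r"
  proof (cases "r > 1")
    case True
    show ?thesis
    proof (rule DERIV_pos_imp_increasing_open[OF True])
      fix t :: real assume t: "1 < t" "t < r"
      have "ln (1 / t) < 1 / t - 1" using t by (intro ln_less_minus_one) auto
      moreover have "b * (1 - t) / t \<ge> (1 - t) / t"
        using b1 t by (intro divide_right_mono mult_right_mono_neg[of 1 b, simplified]) auto
      ultimately have "ln t + b * (1 - t) / t > 0" using t by (simp add: ln_div diff_divide_distrib)
      thus "\<exists>y. DERIV h t :> y \<and> y > 0" using deriv[of t] t by auto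
    qed (use cont in auto)
  next
    case False
    hence "r < 1" using r1 by simp
    show ?thesis
    proof (rule DERIV_neg_imp_decreasing_open[OF \<open>r < 1\<close>])
      fix t :: real assume t: "r < t" "t < 1"
      have "ln t < t - 1" using t r0 by (intro ln_less_minus_one) auto
      moreover have "b * (1 - t) \<le> t * (1 - t)" using br t by (intro mult_right_mono) auto
      hence "b * (1 - t) / t \<le> 1 - t" using t r0 by (simp add: divide_le_eq)
      ultimately have "ln t + b * (1 - t) / t < 0" by linarith
      thus "\<exists>y. DERIV h t :> y \<and> y < 0" using deriv[of t] t r0 by auto
    qed (use cont r0 in auto)
  qed
  thus ?thesis by (simp add: h_def)
qed

text \<open>With \<open>r i = w' i / w i = (d i - \<alpha>) / (m - \<alpha>)\<close> and \<open>b = \<alpha> / (m - \<alpha>)\<close> one has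
  \<open>d i = (m - \<alpha>) (r i + b)\<close>, and the weighted sum equals \<open>(m - \<alpha>) \<Sum>i. w i h (r i)\<close> with
  \<open>h t = (t + b) ln t - (1 + b) (t - 1)\<close>, because the linear terms cancel as \<open>\<Sum>i. w i r i = 1\<close>.
  The bound \<open>\<alpha> \<le> d i / 2\<close> is exactly \<open>b \<le> r i\<close>, and averaging it gives \<open>b \<le> 1\<close>.\<close>
lemma multiplicative_update_gain:
  fixes w w' d :: "'n::finite \<Rightarrow> real" and \<alpha> m :: real
  assumes sw: "(\<Sum>i\<in>UNIV. w i) = 1" and wpos: "\<And>i. w i > 0"
    and sw': "(\<Sum>i\<in>UNIV. w' i) = 1" and w'pos: "\<And>i. w' i > 0"
    and swd: "(\<Sum>i\<in>UNIV. w i * d i) = m" and mpos: "m > 0"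
    and upd: "\<And>i. w' i = w i * (d i - \<alpha>) / (m - \<alpha>)"
    and \<alpha>: "\<And>i. \<alpha> \<le> d i / 2"
  shows "(\<Sum>i\<in>UNIV. w i * d i * ln (w' i / w i)) \<ge> 0"
    and "(\<Sum>i\<in>UNIV. w i * d i * ln (w' i / w i)) = 0 \<Longrightarrow> w' = w"
proof -
  have "(\<Sum>i\<in>UNIV. w i * \<alpha>) \<le> (\<Sum>i\<in>UNIV. w i * (d i / 2))"
    using \<alpha> wpos by (intro sum_mono mult_left_mono) (auto intro: less_imp_le)
  hence "\<alpha> \<le> m / 2"
    using sw swd by (simp add: sum_distrib_right[symmetric] sum_divide_distrib[symmetric])
  define D where "D = m - \<alpha>"
  have D: "D > 0" using \<open>\<alpha> \<le> m / 2\<close> mpos by (simp add: D_def)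
  define r where "r i = w' i / w i" for i
  define b where "b = \<alpha> / D"
  have r: "r i = (d i - \<alpha>) / D" for i using upd[of i] wpos[of i] by (simp add: r_def D_def)
  have rpos: "r i > 0" for i using w'pos wpos by (simp add: r_def)
  have br: "b \<le> r i" for i using \<alpha>[of i] D by (simp add: b_def r divide_right_mono)
  have "w i * r i = w' i" for i using wpos[of i] by (simp add: r_def)
  hence sr: "(\<Sum>i\<in>UNIV. w i * r i) = 1" using sw' by simp
  have "b = (\<Sum>i\<in>UNIV. w i * b)" using sw by (simp add: sum_distrib_right[symmetric])
  also have "\<dots> \<le> 1"
    unfolding sr[symmetric] using br wpos by (intro sum_mono mult_left_mono) (auto intro: less_imp_le)
  finally have b1: "b \<le> 1" .
  define h where "h t = (t + b) * ln t - (1 + b) * (t - 1)" for t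
  have h: "h (r i) \<ge> 0" "h (r i) = 0 \<Longrightarrow> r i = 1" for i
    using shifted_ln_gt_linear[OF b1 rpos br, of i] by (force simp: h_def)+
  have "(\<Sum>i\<in>UNIV. w i * d i * ln (w' i / w i))
      = (\<Sum>i\<in>UNIV. D * (w i * h (r i)) + D * (1 + b) * (w i * r i - w i))"
    using D by (intro sum.cong refl) (simp add: r b_def h_def r_def[symmetric] field_simps)
  also have "\<dots> = D * (\<Sum>i\<in>UNIV. w i * h (r i))"
    using sr sw by (simp add: sum.distrib sum_distrib_left[symmetric] sum_subtractf)
  finally have gain: "(\<Sum>i\<in>UNIV. w i * d i * ln (w' i / w i)) = D * (\<Sum>i\<in>UNIV. w i * h (r i))" .
  have nonneg: "w i * h (r i) \<ge> 0" for i using wpos h by (simp add: less_imp_le)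
  show "(\<Sum>i\<in>UNIV. w i * d i * ln (w' i / w i)) \<ge> 0"
    unfolding gain using D nonneg by (simp add: sum_nonneg)
  assume "(\<Sum>i\<in>UNIV. w i * d i * ln (w' i / w i)) = 0"
  hence "(\<Sum>i\<in>UNIV. w i * h (r i)) = 0" using gain D by simp
  hence "w i * h (r i) = 0" for i using nonneg by (simp add: sum_nonneg_eq_0_iff)
  hence "h (r i) = 0" for i using wpos[of i] by (metis less_irrefl mult_eq_0_iff)
  hence "r i = 1" for i by (rule h(2))
  thus "w' = w" using wpos by (auto simp: r_def)
qed

definition dfun_pointwise :: "('n::finite \<Rightarrow> 'p \<Rightarrow> real^'m^'m) \<Rightarrow> real^'n \<Rightarrow> 'n \<Rightarrow> 'p \<Rightarrow> real" where
  "dfun_pointwise A w i \<theta> = trace (matrix_inv (Mmat A w \<theta>) ** A i \<theta>)"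

lemma nonneg_def_Mmat:
  fixes A :: "'n::finite \<Rightarrow> 'p \<Rightarrow> real^'m^'m"
  shows "(\<And>i. nonneg_def_mat (A i \<theta>)) \<Longrightarrow> (\<And>i. 0 \<le> v $ i) \<Longrightarrow> nonneg_def_mat (Mmat A v \<theta>)"
  unfolding Mmat_def by (intro nonneg_def_mat_sum nonneg_def_mat_scaleR)

lemma dfun_pointwise_nonneg:
  fixes A :: "'n::finite \<Rightarrow> 'p \<Rightarrow> real^'m^'m"
  assumes "\<And>i. nonneg_def_mat (A i \<theta>)" "\<And>i. 0 \<le> v $ i" "det (Mmat A v \<theta>) \<noteq> 0"
  shows "0 \<le> dfun_pointwise A v i \<theta>"
  unfolding dfun_pointwise_def
  by (rule trace_matrix_inv_mult_nonneg_def(1)[OF nonneg_def_Mmat[where A = A and \<theta> = \<theta> and v = v, OF assms(1,2)] assms(3,1)])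

lemma weighted_dfun_pointwise_sum:
  fixes A :: "'n::finite \<Rightarrow> 'p \<Rightarrow> real^'m^'m"
  assumes "\<And>i. nonneg_def_mat (A i \<theta>)" "\<And>i. 0 \<le> v $ i" "det (Mmat A v \<theta>) \<noteq> 0"
  shows "(\<Sum>i\<in>UNIV. v $ i * dfun_pointwise A v i \<theta>) = real CARD('m)"
proof -
  have "(\<Sum>i\<in>UNIV. v $ i * dfun_pointwise A v i \<theta>)
      = trace (matrix_inv (Mmat A v \<theta>) ** (\<Sum>i\<in>UNIV. v $ i *\<^sub>R A i \<theta>))"
    by (simp add: dfun_pointwise_def trace_mult_sum_right trace_mult_scaleR_right)
  also have "\<dots> = real CARD('m)"
    using trace_matrix_inv_mult_nonneg_def(2)[OF nonneg_def_Mmat[where A = A and \<theta> = \<theta> and v = v, OF assms(1,2)] assms(3)]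
    by (simp add: Mmat_def)
  finally show ?thesis .
qed

lemma ln_det_Mmat_ge:
  fixes A :: "'n::finite \<Rightarrow> 'p \<Rightarrow> real^'m^'m"
  assumes nnd: "\<And>i. nonneg_def_mat (A i \<theta>)" and v: "\<And>i. v $ i > 0" and v': "\<And>i. v' $ i > 0"
    and det: "det (Mmat A v \<theta>) > 0"
  shows "det (Mmat A v' \<theta>) > 0"
    and "ln (det (Mmat A v \<theta>)) + (\<Sum>i\<in>UNIV. v $ i * dfun_pointwise A v i \<theta> * ln (v' $ i / v $ i))
          \<le> ln (det (Mmat A v' \<theta>))"
proof -
  define B where "B i = v $ i *\<^sub>R A i \<theta>" for i
  have B: "nonneg_def_mat (B i)" for i
    unfolding B_def using nnd v by (intro nonneg_def_mat_scaleR) (auto intro: less_imp_le)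
  have X: "Mmat A v \<theta> = (\<Sum>i\<in>UNIV. B i)" by (simp add: Mmat_def B_def)
  have Y: "Mmat A v' \<theta> = (\<Sum>i\<in>UNIV. (v' $ i / v $ i) *\<^sub>R B i)"
    unfolding Mmat_def B_def using v by (intro sum.cong refl) (simp add: less_imp_neq[symmetric])
  have tr: "trace (matrix_inv (Mmat A v \<theta>) ** B i) = v $ i * dfun_pointwise A v i \<theta>" for i
    by (simp add: B_def dfun_pointwise_def trace_mult_scaleR_right)
  note main = ln_det_sum_scaleR_ge[OF B _ det[unfolded X]]
  show "det (Mmat A v' \<theta>) > 0" using main(1) v v' Y by simp
  show "ln (det (Mmat A v \<theta>)) + (\<Sum>i\<in>UNIV. v $ i * dfun_pointwise A v i \<theta> * ln (v' $ i / v $ i))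
          \<le> ln (det (Mmat A v' \<theta>))"
    using main(2)[of "\<lambda>i. v' $ i / v $ i"] v v' unfolding X[symmetric] Y[symmetric] tr by simp
qed

lemma ln_det_Mmat_lipschitz:
  fixes A :: "'n::finite \<Rightarrow> 'p \<Rightarrow> real^'m^'m"
  assumes nnd: "\<And>i. nonneg_def_mat (A i \<theta>)" and v: "\<And>i. v $ i > 0" and v': "\<And>i. v' $ i > 0"
    and det: "det (Mmat A v \<theta>) > 0"
  shows "\<bar>ln (det (Mmat A v' \<theta>)) - ln (det (Mmat A v \<theta>))\<bar>
           \<le> real CARD('m) * (\<Sum>i\<in>UNIV. \<bar>ln (v' $ i / v $ i)\<bar>)"
proof -
  have one_side: "ln (det (Mmat A u \<theta>)) - real CARD('m) * (\<Sum>i\<in>UNIV. \<bar>ln (u' $ i / u $ i)\<bar>)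
      \<le> ln (det (Mmat A u' \<theta>))"
    if u: "\<And>i. u $ i > 0" and u': "\<And>i. u' $ i > 0" and det: "det (Mmat A u \<theta>) > 0" for u u'
  proof -
    define t where "t i = u $ i * dfun_pointwise A u i \<theta>" for i
    have t0: "0 \<le> t i" for i
      using dfun_pointwise_nonneg[where A = A and \<theta> = \<theta> and v = u] nnd u det
      by (simp add: t_def less_imp_le)
    have "t i \<le> (\<Sum>j\<in>UNIV. t j)" for i by (rule member_le_sum) (auto intro: t0)
    hence tm: "t i \<le> real CARD('m)" for i
      using weighted_dfun_pointwise_sum[where A = A and \<theta> = \<theta> and v = u] nnd u det
      by (simp add: t_def less_imp_le)
    have "- (real CARD('m) * \<bar>ln (u' $ i / u $ i)\<bar>) \<le> t i * ln (u' $ i / u $ i)" for i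
    proof -
      have "\<bar>t i * ln (u' $ i / u $ i)\<bar> \<le> real CARD('m) * \<bar>ln (u' $ i / u $ i)\<bar>"
        using t0[of i] tm[of i] by (simp add: abs_mult mult_right_mono)
      thus ?thesis by linarith
    qed
    hence "- (real CARD('m) * (\<Sum>i\<in>UNIV. \<bar>ln (u' $ i / u $ i)\<bar>)) \<le> (\<Sum>i\<in>UNIV. t i * ln (u' $ i / u $ i))"
      by (simp add: sum_distrib_left sum_negf[symmetric] sum_mono)
    thus ?thesis using ln_det_Mmat_ge(2)[OF nnd u u' det] by (simp add: t_def)
  qed
  have "\<bar>ln (v $ i / v' $ i)\<bar> = \<bar>ln (v' $ i / v $ i)\<bar>" for i
    using v[of i] v'[of i] by (simp add: ln_div)
  thus ?thesis
    using one_side[OF v v' det] one_side[OF v' v ln_det_Mmat_ge(1)[OF nnd v v' det]] by auto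
qed

lemma Omega_pos: "w \<in> Omega \<Longrightarrow> 0 < w $ i"
  by (simp add: Omega_def)

locale bayesian_design = prob_space \<pi> for \<pi> :: "'p measure" +
  fixes A :: "'n::finite \<Rightarrow> 'p \<Rightarrow> real^'m::finite^'m"
  assumes borel_measurable_A: "\<And>i. A i \<in> borel_measurable \<pi>"
    and nonneg_def_A: "\<And>i \<theta>. \<theta> \<in> space \<pi> \<Longrightarrow> nonneg_def_mat (A i \<theta>)"
begin

lemma AE_det_pos_nonneg_def:
  assumes "phi_finite \<pi> A v"
  shows "AE \<theta> in \<pi>. 0 < det (Mmat A v \<theta>) \<and> (\<forall>i. nonneg_def_mat (A i \<theta>))"
proof -
  have "AE \<theta> in \<pi>. \<forall>i. nonneg_def_mat (A i \<theta>)" using nonneg_def_A by (intro AE_I2) auto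
  with assms show ?thesis by (auto simp: phi_finite_def elim: AE_mp)
qed

lemma borel_measurable_Mmat: "Mmat A v \<in> borel_measurable \<pi>"
  unfolding Mmat_def[abs_def] using borel_measurable_A by measurable

lemma borel_measurable_ln_det_Mmat: "(\<lambda>\<theta>. ln (det (Mmat A v \<theta>))) \<in> borel_measurable \<pi>"
  by (intro borel_measurable_ln borel_measurable_det borel_measurable_matrix_entry
      borel_measurable_Mmat)

lemma borel_measurable_dfun_pointwise: "dfun_pointwise A v i \<in> borel_measurable \<pi>"
  unfolding dfun_pointwise_def[abs_def]
  by (intro borel_measurable_trace_matrix_inv_mult borel_measurable_Mmat borel_measurable_A)

lemma phi_finite_Omega:
  assumes w0: "w0 \<in> Omega" "phi_finite \<pi> A w0" and v: "v \<in> Omega"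
  shows "phi_finite \<pi> A v"
proof -
  define K where "K = real CARD('m) * (\<Sum>i\<in>UNIV. \<bar>ln (v $ i / w0 $ i)\<bar>)"
  have "AE \<theta> in \<pi>. 0 < det (Mmat A v \<theta>) \<and>
      \<bar>ln (det (Mmat A v \<theta>)) - ln (det (Mmat A w0 \<theta>))\<bar> \<le> K"
    using AE_det_pos_nonneg_def[OF w0(2)]
  proof eventually_elim
    case (elim \<theta>)
    hence nnd: "\<And>i. nonneg_def_mat (A i \<theta>)" and det: "0 < det (Mmat A w0 \<theta>)" by auto
    note pos = Omega_pos[OF w0(1)] Omega_pos[OF v]
    show ?case
      using ln_det_Mmat_ge(1)[OF nnd pos det] ln_det_Mmat_lipschitz[OF nnd pos det]
      by (simp add: K_def)
  qed
  hence AE: "AE \<theta> in \<pi>. 0 < det (Mmat A v \<theta>)"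
    and bound: "AE \<theta> in \<pi>. norm (ln (det (Mmat A v \<theta>))) \<le> norm (\<bar>ln (det (Mmat A w0 \<theta>))\<bar> + K)"
    by (auto elim: AE_mp)
  have "integrable \<pi> (\<lambda>\<theta>. \<bar>ln (det (Mmat A w0 \<theta>))\<bar> + K)"
    using w0(2) by (auto simp: phi_finite_def)
  hence "integrable \<pi> (\<lambda>\<theta>. ln (det (Mmat A v \<theta>)))"
    using borel_measurable_ln_det_Mmat bound by (rule Bochner_Integration.integrable_bound)
  with AE show ?thesis by (simp add: phi_finite_def)
qed

lemma integrable_dfun_pointwise:
  assumes "v \<in> Omega" "phi_finite \<pi> A v"
  shows "integrable \<pi> (dfun_pointwise A v i)"
proof (rule integrable_const_bound)
  show "AE \<theta> in \<pi>. norm (dfun_pointwise A v i \<theta>) \<le> real CARD('m) / v $ i"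
    using AE_det_pos_nonneg_def[OF assms(2)]
  proof eventually_elim
    case (elim \<theta>)
    hence nnd: "\<And>i. nonneg_def_mat (A i \<theta>)" and det: "det (Mmat A v \<theta>) \<noteq> 0" by auto
    let ?t = "\<lambda>j. v $ j * dfun_pointwise A v j \<theta>"
    have pos: "0 < v $ j" for j using assms(1) by (rule Omega_pos)
    hence t0: "0 \<le> dfun_pointwise A v j \<theta>" for j
      using dfun_pointwise_nonneg[OF nnd _ det] by (simp add: less_imp_le)
    have "?t i \<le> (\<Sum>j\<in>UNIV. ?t j)"
      using pos t0 by (intro member_le_sum) (auto intro: mult_nonneg_nonneg less_imp_le)
    also have "\<dots> = real CARD('m)"
      using weighted_dfun_pointwise_sum[OF nnd _ det] pos by (simp add: less_imp_le)
    finally show ?case using t0[of i] pos[of i] by (simp add: field_simps)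
  qed
qed (rule borel_measurable_dfun_pointwise)

lemma weighted_dfun_sum:
  assumes "v \<in> Omega" "phi_finite \<pi> A v"
  shows "(\<Sum>i\<in>UNIV. v $ i * dfun \<pi> A v i) = real CARD('m)"
proof -
  have "(\<Sum>i\<in>UNIV. v $ i * dfun \<pi> A v i) = (\<integral>\<theta>. (\<Sum>i\<in>UNIV. v $ i * dfun_pointwise A v i \<theta>) \<partial>\<pi>)"
    using integrable_dfun_pointwise[OF assms]
    by (simp add: dfun_def dfun_pointwise_def[symmetric])
  also have "\<dots> = (\<integral>\<theta>. real CARD('m) \<partial>\<pi>)"
  proof (rule integral_cong_AE)
    show "AE \<theta> in \<pi>. (\<Sum>i\<in>UNIV. v $ i * dfun_pointwise A v i \<theta>) = real CARD('m)"
      using AE_det_pos_nonneg_def[OF assms(2)]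
    proof eventually_elim
      case (elim \<theta>)
      hence nnd: "\<And>i. nonneg_def_mat (A i \<theta>)" and det: "det (Mmat A v \<theta>) \<noteq> 0" by auto
      show ?case
        using weighted_dfun_pointwise_sum[OF nnd _ det] Omega_pos[OF assms(1)] by (simp add: less_imp_le)
    qed
  qed (use borel_measurable_dfun_pointwise in measurable)
  finally show ?thesis by (simp add: prob_space)
qed

lemma phi_ge_weighted_ln_ratio:
  assumes w: "w \<in> Omega" "phi_finite \<pi> A w" and w': "w' \<in> Omega"
  shows "phi \<pi> A w + (\<Sum>i\<in>UNIV. w $ i * dfun \<pi> A w i * ln (w' $ i / w $ i)) \<le> phi \<pi> A w'"
proof -
  let ?c = "\<lambda>i. w $ i * ln (w' $ i / w $ i)"
  have int_w: "integrable \<pi> (\<lambda>\<theta>. ln (det (Mmat A w \<theta>)))" using w(2) by (simp add: phi_finite_def)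
  have int_w': "integrable \<pi> (\<lambda>\<theta>. ln (det (Mmat A w' \<theta>)))"
    using phi_finite_Omega[OF w w'] by (simp add: phi_finite_def)
  have "phi \<pi> A w + (\<Sum>i\<in>UNIV. w $ i * dfun \<pi> A w i * ln (w' $ i / w $ i))
      = (\<integral>\<theta>. ln (det (Mmat A w \<theta>)) + (\<Sum>i\<in>UNIV. ?c i * dfun_pointwise A w i \<theta>) \<partial>\<pi>)"
    using int_w integrable_dfun_pointwise[OF w]
    by (simp add: phi_def dfun_def dfun_pointwise_def[symmetric] mult_ac)
  also have "\<dots> \<le> phi \<pi> A w'"
    unfolding phi_def
  proof (rule integral_mono_AE)
    show "integrable \<pi> (\<lambda>\<theta>. ln (det (Mmat A w \<theta>)) + (\<Sum>i\<in>UNIV. ?c i * dfun_pointwise A w i \<theta>))"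
      using int_w integrable_dfun_pointwise[OF w] by auto
    show "AE \<theta> in \<pi>. ln (det (Mmat A w \<theta>)) + (\<Sum>i\<in>UNIV. ?c i * dfun_pointwise A w i \<theta>)
        \<le> ln (det (Mmat A w' \<theta>))"
      using AE_det_pos_nonneg_def[OF w(2)]
    proof eventually_elim
      case (elim \<theta>)
      hence nnd: "\<And>i. nonneg_def_mat (A i \<theta>)" and det: "0 < det (Mmat A w \<theta>)" by auto
      show ?case
        using ln_det_Mmat_ge(2)[OF nnd Omega_pos[OF w(1)] Omega_pos[OF w'] det] by (simp add: mult_ac)
    qed
  qed (rule int_w')
  finally show ?thesis .
qed

end

theorem theorem1:
  fixes \<pi> :: "'p measure"
    and A :: "'n::finite \<Rightarrow> 'p \<Rightarrow> real^'m::finite^'m"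
    and w w' :: "real^'n" and \<alpha> :: real
  assumes prob: "prob_space \<pi>"
    and meas: "\<And>i. A i \<in> borel_measurable \<pi>"
    and nnd: "\<And>i \<theta>. \<theta> \<in> space \<pi> \<Longrightarrow> nonneg_def_mat (A i \<theta>)"
    and fin: "\<exists>w0\<in>Omega. phi_finite \<pi> A w0"
    and w_in: "w \<in> Omega" and w'_in: "w' \<in> Omega"
    and upd: "\<And>i. w' $ i = w $ i * (dfun \<pi> A w i - \<alpha>) / (real CARD('m) - \<alpha>)"
    and alpha: "\<alpha> \<le> 1/2 * Min (range (\<lambda>i. dfun \<pi> A w i))"
  shows "phi \<pi> A w' \<ge> phi \<pi> A w \<and> (phi \<pi> A w' = phi \<pi> A w \<longrightarrow> w' = w)"
proof -
  interpret bayesian_design \<pi> A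
    using prob meas nnd by (simp add: bayesian_design_def bayesian_design_axioms_def)
  have w_fin: "phi_finite \<pi> A w" using fin phi_finite_Omega w_in by blast
  have "\<alpha> \<le> dfun \<pi> A w i / 2" for i
    using alpha Min_le[of "range (\<lambda>i. dfun \<pi> A w i)" "dfun \<pi> A w i"] by simp
  with w_in w'_in weighted_dfun_sum[OF w_in w_fin] upd
  have gain: "(\<Sum>i\<in>UNIV. w $ i * dfun \<pi> A w i * ln (w' $ i / w $ i)) \<ge> 0"
    "(\<Sum>i\<in>UNIV. w $ i * dfun \<pi> A w i * ln (w' $ i / w $ i)) = 0 \<Longrightarrow> (\<lambda>i. w' $ i) = (\<lambda>i. w $ i)"
    using multiplicative_update_gain[of "\<lambda>i. w $ i" "\<lambda>i. w' $ i" "dfun \<pi> A w" "real CARD('m)" \<alpha>]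
    by (auto simp: Omega_def)
  show ?thesis
    using phi_ge_weighted_ln_ratio[OF w_in w_fin w'_in] gain by (auto simp: vec_eq_iff fun_eq_iff)
qed

end
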